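(* Let $G=(V,E)$ be a finite simple connected graph with graph distance $d$, let $S$ be a multiset of $s$ vertices, $\delta>0$, and $\Phi^{*}(v)=\sum_{u\in S}d(u,v)$. Let $q$ be a vertex such that $\Phi^{*}(q)\le\Phi^{*}(v)+\delta s$ for every $v\in N(q)$. Then $\Lambda^{*}(q)\le\frac{s(1+\delta)}{2}$.
   Context: For vertices $q,v$, a vertex $u$ is consistent with $(q,v)$ if $q=v=u$, or $q\ne v$ and $v$ lies on a shortest path between $u$ and $q$; $N(q,v)$ is the set of such $u$. $N(q)$ is the neighbor set of $q$. $\Lambda^{*}(q)=\max_{v\in N(q)}|S\cap N(q,v)|$, where $S\cap X$ is the multiset of elements of $S$ lying in $X$ (with multiplicity); sums over $S$ are with multiplicity. *)

theory Defs
  imports Complex_Main "HOL-Library.Multiset"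
begin

definition simple_graph :: "'a set \<Rightarrow> ('a \<Rightarrow> 'a \<Rightarrow> bool) \<Rightarrow> bool" where
  "simple_graph V E \<longleftrightarrow> finite V \<and> (\<forall>u v. E u v \<longrightarrow> u \<in> V \<and> v \<in> V)
     \<and> (\<forall>u v. E u v \<longrightarrow> E v u) \<and> (\<forall>u. \<not> E u u)"

fun walk :: "('a \<Rightarrow> 'a \<Rightarrow> bool) \<Rightarrow> 'a list \<Rightarrow> bool" where
  "walk E [] = False"
| "walk E [x] = True"
| "walk E (x # y # xs) = (E x y \<and> walk E (y # xs))"

definition connected_graph :: "'a set \<Rightarrow> ('a \<Rightarrow> 'a \<Rightarrow> bool) \<Rightarrow> bool" where
  "connected_graph V E \<longleftrightarrow> (\<forall>u\<in>V. \<forall>v\<in>V. \<exists>xs. walk E xs \<and> hd xs = u \<and> last xs = v)"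

definition gdist :: "('a \<Rightarrow> 'a \<Rightarrow> bool) \<Rightarrow> 'a \<Rightarrow> 'a \<Rightarrow> nat" where
  "gdist E u v = (LEAST n. \<exists>xs. walk E xs \<and> hd xs = u \<and> last xs = v \<and> length xs = Suc n)"

definition nbrs :: "('a \<Rightarrow> 'a \<Rightarrow> bool) \<Rightarrow> 'a \<Rightarrow> 'a set" where
  "nbrs E q = {v. E q v}"

definition consistent_set :: "'a set \<Rightarrow> ('a \<Rightarrow> 'a \<Rightarrow> bool) \<Rightarrow> 'a \<Rightarrow> 'a \<Rightarrow> 'a set" where
  "consistent_set V E q v = {u \<in> V. (q = v \<and> v = u) \<or>
      (q \<noteq> v \<and> gdist E u q = gdist E u v + gdist E v q)}"

definition Phi_star :: "('a \<Rightarrow> 'a \<Rightarrow> bool) \<Rightarrow> 'a multiset \<Rightarrow> 'a \<Rightarrow> nat" where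
  "Phi_star E S v = (\<Sum>u\<in>#S. gdist E u v)"

definition Lambda_star :: "'a set \<Rightarrow> ('a \<Rightarrow> 'a \<Rightarrow> bool) \<Rightarrow> 'a multiset \<Rightarrow> 'a \<Rightarrow> nat" where
  "Lambda_star V E S q = Max (insert 0
      ((\<lambda>v. size (filter_mset (\<lambda>u. u \<in> consistent_set V E q v) S)) ` nbrs E q))"

end

theory Submission
  imports Defs
begin

text \<open>For a neighbour v of q every vertex u satisfies d(u,v) \<le> d(u,q) + 1, and the vertices
  consistent with (q,v) even satisfy d(u,v) = d(u,q) - 1. Summing over S gives
  \<Phi>*(v) + 2|S \<inter> N(q,v)| \<le> \<Phi>*(q) + s, while the local optimality of q gives
  \<Phi>*(q) \<le> \<Phi>*(v) + \<delta>s; together 2|S \<inter> N(q,v)| \<le> s(1 + \<delta>).\<close>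

lemma walk_nonempty: "walk E xs \<Longrightarrow> xs \<noteq> []"
  by (cases xs) auto

lemma walk_snoc: "walk E xs \<Longrightarrow> E (last xs) y \<Longrightarrow> walk E (xs @ [y])"
  by (induction E xs rule: walk.induct) auto

lemma gdist_le_walk_length:
  assumes "walk E xs" "hd xs = u" "last xs = v"
  shows "gdist E u v \<le> length xs - 1"
  unfolding gdist_def
proof (rule Least_le)
  show "\<exists>ys. walk E ys \<and> hd ys = u \<and> last ys = v \<and> length ys = Suc (length xs - 1)"
    using assms walk_nonempty[OF assms(1)] by auto
qed

lemma gdist_attained:
  assumes "walk E xs" "hd xs = u" "last xs = v"
  obtains ys where "walk E ys" "hd ys = u" "last ys = v" "length ys = Suc (gdist E u v)"
proof -
  have "\<exists>ys. walk E ys \<and> hd ys = u \<and> last ys = v \<and> length ys = Suc (length xs - 1)"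
    using assms walk_nonempty[OF assms(1)] by auto
  then have "\<exists>ys. walk E ys \<and> hd ys = u \<and> last ys = v \<and> length ys = Suc (gdist E u v)"
    unfolding gdist_def by (rule LeastI)
  then show ?thesis using that by blast
qed

lemma gdist_le_Suc_gdist_edge:
  assumes "walk E xs" "hd xs = u" "last xs = q" "E q v"
  shows "gdist E u v \<le> Suc (gdist E u q)"
proof -
  obtain ys where ys: "walk E ys" "hd ys = u" "last ys = q" "length ys = Suc (gdist E u q)"
    using gdist_attained[OF assms(1-3)] .
  have "walk E (ys @ [v])"
    using walk_snoc ys(1,3) assms(4) by metis
  moreover have "hd (ys @ [v]) = u"
    using ys(2) walk_nonempty[OF ys(1)] by simp
  ultimately have "gdist E u v \<le> length (ys @ [v]) - 1"
    using gdist_le_walk_length by fastforce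
  then show ?thesis using ys(4) by simp
qed

lemma gdist_edge:
  assumes "E v q" "v \<noteq> q"
  shows "gdist E v q = 1"
proof -
  have w: "walk E [v, q]" using assms(1) by simp
  obtain ys where ys: "walk E ys" "hd ys = v" "last ys = q" "length ys = Suc (gdist E v q)"
    using gdist_attained[OF w] by auto
  have "gdist E v q \<noteq> 0"
  proof
    assume "gdist E v q = 0"
    with ys(4) obtain a where "ys = [a]" by (cases ys) auto
    with ys(2,3) assms(2) show False by simp
  qed
  moreover have "gdist E v q \<le> 1"
    using gdist_le_walk_length[OF w] by simp
  ultimately show ?thesis by simp
qed

lemma gdist_neighbour_consistent:
  assumes "simple_graph V E" "walk E xs" "hd xs = u" "last xs = q" "E q v"
  shows "gdist E u v + 2 * of_bool (u \<in> consistent_set V E q v) \<le> Suc (gdist E u q)"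
proof (cases "u \<in> consistent_set V E q v")
  case True
  have "E v q" "q \<noteq> v"
    using assms(1,5) unfolding simple_graph_def by metis+
  with True have "gdist E u q = gdist E u v + gdist E v q"
    unfolding consistent_set_def by simp
  with gdist_edge[of E v q] \<open>E v q\<close> \<open>q \<noteq> v\<close> have "gdist E u q = gdist E u v + 1"
    by simp
  with True show ?thesis by simp
next
  case False
  with gdist_le_Suc_gdist_edge[OF assms(2-5)] show ?thesis by simp
qed

lemma sum_mset_filter_bound:
  fixes f g :: "'a \<Rightarrow> nat"
  assumes "\<forall>u\<in>#S. f u + 2 * of_bool (P u) \<le> Suc (g u)"
  shows "(\<Sum>u\<in>#S. f u) + 2 * size (filter_mset P S) \<le> (\<Sum>u\<in>#S. g u) + size S"
  using assms by (induction S) (auto split: if_splits)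

lemma Phi_star_neighbour_bound:
  assumes "simple_graph V E" "connected_graph V E" "set_mset S \<subseteq> V" "q \<in> V" "E q v"
  shows "Phi_star E S v + 2 * size (filter_mset (\<lambda>u. u \<in> consistent_set V E q v) S)
           \<le> Phi_star E S q + size S"
  unfolding Phi_star_def
proof (rule sum_mset_filter_bound, intro ballI)
  fix u assume "u \<in># S"
  with assms(2-4) obtain xs where "walk E xs" "hd xs = u" "last xs = q"
    unfolding connected_graph_def by blast
  then show "gdist E u v + 2 * of_bool (u \<in> consistent_set V E q v) \<le> Suc (gdist E u q)"
    by (rule gdist_neighbour_consistent[OF assms(1) _ _ _ assms(5)])
qed

theorem lemma13:
  fixes V :: "'a set" and E :: "'a \<Rightarrow> 'a \<Rightarrow> bool" and S :: "'a multiset"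
    and s :: nat and \<delta> :: real and q :: 'a
  assumes "simple_graph V E" and "connected_graph V E"
    and "set_mset S \<subseteq> V" and "size S = s"
    and "\<delta> > 0" and "q \<in> V"
    and "\<forall>v \<in> nbrs E q. real (Phi_star E S q) \<le> real (Phi_star E S v) + \<delta> * real s"
  shows "real (Lambda_star V E S q) \<le> real s * (1 + \<delta>) / 2"
proof -
  let ?count = "\<lambda>v. size (filter_mset (\<lambda>u. u \<in> consistent_set V E q v) S)"
  have neighbour_bound: "real (?count v) \<le> real s * (1 + \<delta>) / 2" if "v \<in> nbrs E q" for v
  proof -
    have "E q v" using that unfolding nbrs_def by simp
    then have "Phi_star E S v + 2 * ?count v \<le> Phi_star E S q + s"
      using Phi_star_neighbour_bound[OF assms(1-3,6)] assms(4) by simp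
    then have "real (Phi_star E S v) + 2 * real (?count v) \<le> real (Phi_star E S q) + real s"
      by linarith
    moreover have "real (Phi_star E S q) \<le> real (Phi_star E S v) + \<delta> * real s"
      using assms(7) that by blast
    ultimately show ?thesis by (simp add: field_simps)
  qed
  have "nbrs E q \<subseteq> V"
    using assms(1) unfolding simple_graph_def nbrs_def by blast
  then have "finite (nbrs E q)"
    using assms(1) unfolding simple_graph_def by (simp add: finite_subset)
  then have "Lambda_star V E S q \<in> insert 0 (?count ` nbrs E q)"
    unfolding Lambda_star_def by (intro Max_in) simp_all
  then show ?thesis
    using neighbour_bound assms(5) by (auto simp: zero_le_mult_iff)
qed

end
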